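(* Let $s\in(0,1)$, $\mu$ a nonnegative finite measure on $S^{d-1}$, and $\Omega\subset\mathbb{R}^d$ open and bounded. If $u\in L^1(\Omega)\cap L^1(\mathbb{R}^d,\nu^\star(x)\,dx)$ and $\eta\in C_c^\infty(\Omega)$, then $(u,A_s\eta)_{L^2(\mathbb{R}^d)}=\int_{\mathbb{R}^d}u(x)A_s\eta(x)\,dx$ exists (the integrand is integrable).
   Context: $A_s u(x)=\lim_{\kappa\to0+}\int_{\{|r|\ge\kappa\}}\int_{S^{d-1}}\frac{u(x)-u(x+r\theta)}{|r|^{1+2s}}\,\mu(d\theta)\,dr$. $\nu^\star(x)=\int_{\mathbb{R}}\int_{S^{d-1}}\mathbf{1}_\Omega(x+r\theta)(1+|r|)^{-1-2s}\,\mu(d\theta)\,dr$. *)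

theory Defs
  imports "HOL-Analysis.Analysis"
begin

fun dderiv :: "'a::euclidean_space list \<Rightarrow> ('a \<Rightarrow> real) \<Rightarrow> 'a \<Rightarrow> real" where
  "dderiv [] f = f"
| "dderiv (v # vs) f = (\<lambda>x. frechet_derivative (dderiv vs f) (at x) v)"

definition smooth :: "('a::euclidean_space \<Rightarrow> real) \<Rightarrow> bool" where
  "smooth f \<longleftrightarrow> (\<forall>vs x. dderiv vs f differentiable (at x))"

definition Cc_inf :: "'a::euclidean_space set \<Rightarrow> ('a \<Rightarrow> real) \<Rightarrow> bool" where
  "Cc_inf \<Omega> \<eta> \<longleftrightarrow> smooth \<eta> \<and> compact (closure {x. \<eta> x \<noteq> 0})
      \<and> closure {x. \<eta> x \<noteq> 0} \<subseteq> \<Omega>"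

definition A_op :: "real \<Rightarrow> 'a::euclidean_space measure \<Rightarrow> ('a \<Rightarrow> real) \<Rightarrow> 'a \<Rightarrow> real" where
  "A_op s \<mu> u x = Lim (at_right 0) (\<lambda>\<kappa>.
     LINT r:{r. \<bar>r\<bar> \<ge> \<kappa>}|lborel.
       (LINT \<theta>|\<mu>. (u x - u (x + r *\<^sub>R \<theta>)) / \<bar>r\<bar> powr (1 + 2 * s)))"

definition nu_star :: "real \<Rightarrow> 'a::euclidean_space measure \<Rightarrow> 'a set \<Rightarrow> 'a \<Rightarrow> real" where
  "nu_star s \<mu> \<Omega> x = (LINT r|lborel.
     (LINT \<theta>|\<mu>. indicator \<Omega> (x + r *\<^sub>R \<theta>) * (1 + \<bar>r\<bar>) powr (-1 - 2 * s)))"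

end

theory Submission
  imports Defs
begin

(* Pairing r with -r turns the principal value A_s eta(x) into the integral over r > 0 of
   the second difference 2 eta(x) - eta(x + r theta) - eta(x - r theta) against
   |r|^(-1-2s). This integrand is O(r^(1-2s)) near 0 and O(r^(-1-2s)) at infinity, uniformly
   in x, so by dominated convergence A_s eta(x) is a Lebesgue integral bounded uniformly in x.
   Let delta be half the distance from supp eta to the complement of Omega. If x is within
   delta of supp eta, the ball of radius delta around x lies in Omega, so nu*(x) is bounded
   below and dominates that bound. Otherwise only points x + r theta of supp eta contribute;
   they lie in Omega and have |r| >= delta, where |r|^(-1-2s) <= C (1 + |r|)^(-1-2s). Hence
   |A_s eta| <= K nu* everywhere, and u A_s eta is dominated by K nu* u. *)

lemma dderiv_eq_0_on_open:
  assumes "open U" and "\<And>y. y \<in> U \<Longrightarrow> f y = 0" and "x \<in> U"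
  shows "dderiv vs f x = 0"
  using assms(3)
proof (induction vs arbitrary: x)
  case Nil
  then show ?case using assms(2) by simp
next
  case (Cons v vs)
  have "(dderiv vs f has_derivative (\<lambda>_. 0)) (at x)"
    by (rule has_derivative_transform_within_open[of "\<lambda>_. 0", OF _ assms(1) Cons.prems])
      (use Cons.IH in auto)
  then show ?case by (simp add: frechet_derivative_at[symmetric])
qed

lemma has_real_derivative_along_line:
  fixes f :: "'a::euclidean_space \<Rightarrow> real"
  assumes "\<And>y. f differentiable (at y)"
  shows "((\<lambda>t. f (x + t *\<^sub>R h)) has_real_derivative
           (\<Sum>b\<in>Basis. (h \<bullet> b) * dderiv [b] f (x + t *\<^sub>R h))) (at t)"
proof -
  let ?D = "frechet_derivative f (at (x + t *\<^sub>R h))"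
  have D: "(f has_derivative ?D) (at (x + t *\<^sub>R h))"
    using assms frechet_derivative_works by blast
  then have "linear ?D" by (rule has_derivative_linear)
  then have D_h: "?D (dt *\<^sub>R h) = dt * (\<Sum>b\<in>Basis. (h \<bullet> b) * ?D b)" for dt
  proof -
    have "?D h = ?D (\<Sum>b\<in>Basis. (h \<bullet> b) *\<^sub>R b)" by (simp only: euclidean_representation)
    then show ?thesis using \<open>linear ?D\<close> by (simp add: linear_scale linear_sum)
  qed
  have "((\<lambda>t. x + t *\<^sub>R h) has_derivative (\<lambda>dt. dt *\<^sub>R h)) (at t)"
    by (auto intro!: derivative_eq_intros)
  from diff_chain_at[OF this D]
  have "((\<lambda>t. f (x + t *\<^sub>R h)) has_derivative (\<lambda>dt. ?D (dt *\<^sub>R h))) (at t)"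
    by (simp add: o_def)
  moreover have "(\<lambda>dt. dt * c) = (*) c" for c :: real
    by (auto simp: fun_eq_iff)
  ultimately show ?thesis
    by (simp add: has_field_derivative_def D_h)
qed

lemma second_difference_le:
  fixes \<phi> \<phi>' \<phi>'' :: "real \<Rightarrow> real"
  assumes \<phi>': "\<And>t. (\<phi> has_real_derivative \<phi>' t) (at t)"
    and \<phi>'': "\<And>t. (\<phi>' has_real_derivative \<phi>'' t) (at t)"
    and bound: "\<And>t. \<bar>\<phi>'' t\<bar> \<le> K"
  shows "\<bar>\<phi> 1 + \<phi> (-1) - 2 * \<phi> 0\<bar> \<le> 2 * K"
proof -
  define \<psi> where "\<psi> t = \<phi> t + \<phi> (-t)" for t
  have \<psi>': "(\<psi> has_real_derivative (\<phi>' t - \<phi>' (-t))) (at t)" for t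
  proof -
    have "((\<lambda>z. \<phi> (-z)) has_real_derivative \<phi>' (-t) * (-1)) (at t)"
      by (rule DERIV_chain2[OF \<phi>']) (auto intro!: derivative_eq_intros)
    from DERIV_add[OF \<phi>' this] show ?thesis unfolding \<psi>_def by simp
  qed
  then obtain z where z: "0 < z" "z < 1" "\<psi> 1 - \<psi> 0 = \<phi>' z - \<phi>' (-z)"
    using MVT2[of 0 1 \<psi> "\<lambda>t. \<phi>' t - \<phi>' (-t)"] \<psi>' by auto
  obtain w where w: "\<phi>' z - \<phi>' (-z) = 2 * z * \<phi>'' w"
    using MVT2[of "-z" z \<phi>' \<phi>''] \<phi>'' z by auto
  have "\<bar>\<phi> 1 + \<phi> (-1) - 2 * \<phi> 0\<bar> = 2 * z * \<bar>\<phi>'' w\<bar>"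
    using z w unfolding \<psi>_def by (simp add: abs_mult)
  also have "\<dots> \<le> 2 * 1 * K"
    using z bound[of w] by (intro mult_mono) auto
  finally show ?thesis by simp
qed

lemma sum_Basis_quadratic_form_le:
  fixes h :: "'a::euclidean_space"
  assumes "\<And>b c. b \<in> Basis \<Longrightarrow> c \<in> Basis \<Longrightarrow> \<bar>a b c\<bar> \<le> B b c"
  shows "\<bar>\<Sum>b\<in>Basis. (h \<bullet> b) * (\<Sum>c\<in>Basis. (h \<bullet> c) * a b c)\<bar>
           \<le> (\<Sum>b\<in>Basis. \<Sum>c\<in>Basis. B b c) * (norm h)\<^sup>2"
proof -
  have "\<bar>\<Sum>b\<in>Basis. (h \<bullet> b) * (\<Sum>c\<in>Basis. (h \<bullet> c) * a b c)\<bar>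
      \<le> (\<Sum>b\<in>Basis. \<Sum>c\<in>Basis. \<bar>(h \<bullet> b) * ((h \<bullet> c) * a b c)\<bar>)"
    unfolding sum_distrib_left by (rule order_trans[OF sum_abs]) (intro sum_mono sum_abs)
  also have "\<dots> \<le> (\<Sum>b\<in>Basis. \<Sum>c\<in>Basis. B b c * (norm h)\<^sup>2)"
  proof (intro sum_mono)
    fix b c :: 'a
    assume bc: "b \<in> Basis" "c \<in> Basis"
    have "\<bar>(h \<bullet> b) * ((h \<bullet> c) * a b c)\<bar> = \<bar>h \<bullet> b\<bar> * (\<bar>h \<bullet> c\<bar> * \<bar>a b c\<bar>)"
      by (simp add: abs_mult)
    also have "\<dots> \<le> norm h * (norm h * B b c)"
      using Basis_le_norm[OF bc(1), of h] Basis_le_norm[OF bc(2), of h] assms[OF bc]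
      by (intro mult_mono) auto
    finally show "\<bar>(h \<bullet> b) * ((h \<bullet> c) * a b c)\<bar> \<le> B b c * (norm h)\<^sup>2"
      by (simp add: power2_eq_square mult_ac)
  qed
  finally show ?thesis by (simp add: sum_distrib_right)
qed

lemma Cc_inf_dderiv_bounded:
  assumes "Cc_inf \<Omega> \<eta>"
  shows "\<exists>B\<ge>0. \<forall>y. \<bar>dderiv vs \<eta> y\<bar> \<le> B"
proof -
  let ?S = "closure {x. \<eta> x \<noteq> 0}"
  have smooth: "\<And>vs x. dderiv vs \<eta> differentiable (at x)" and "compact ?S"
    using assms unfolding Cc_inf_def smooth_def by auto
  moreover have "continuous_on ?S (dderiv vs \<eta>)"
    using smooth by (intro continuous_at_imp_continuous_on ballI differentiable_imp_continuous_within)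
  ultimately have "bounded (dderiv vs \<eta> ` ?S)"
    by (intro compact_imp_bounded compact_continuous_image)
  then obtain B where B: "B > 0" "\<And>y. y \<in> ?S \<Longrightarrow> \<bar>dderiv vs \<eta> y\<bar> \<le> B"
    unfolding bounded_pos by auto
  have "dderiv vs \<eta> y = 0" if "y \<notin> ?S" for y
    using that closure_subset[of "{x. \<eta> x \<noteq> 0}"] by (intro dderiv_eq_0_on_open[of "- ?S"]) auto
  with B show ?thesis by (intro exI[of _ B]) (metis abs_zero less_imp_le)
qed

lemma Cc_inf_second_difference_le:
  fixes \<eta> :: "'a::euclidean_space \<Rightarrow> real"
  assumes "Cc_inf \<Omega> \<eta>"
  shows "\<exists>M\<ge>0. \<forall>x h. \<bar>\<eta> (x + h) + \<eta> (x - h) - 2 * \<eta> x\<bar> \<le> M * (norm h)\<^sup>2"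
proof -
  have smooth: "\<And>vs x. dderiv vs \<eta> differentiable (at x)"
    using assms unfolding Cc_inf_def smooth_def by auto
  obtain B where B: "\<And>vs. B vs \<ge> 0" "\<And>vs y. \<bar>dderiv vs \<eta> y\<bar> \<le> B vs"
    using Cc_inf_dderiv_bounded[OF assms] by metis
  define M where "M = (\<Sum>b\<in>Basis. \<Sum>c\<in>(Basis::'a set). B [c, b])"
  have "\<bar>\<eta> (x + h) + \<eta> (x - h) - 2 * \<eta> x\<bar> \<le> 2 * M * (norm h)\<^sup>2" for x h
  proof -
    define \<phi> where "\<phi> t = \<eta> (x + t *\<^sub>R h)" for t
    define \<phi>' where "\<phi>' t = (\<Sum>b\<in>Basis. (h \<bullet> b) * dderiv [b] \<eta> (x + t *\<^sub>R h))" for t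
    define \<phi>'' where "\<phi>'' t = (\<Sum>b\<in>Basis. (h \<bullet> b) *
        (\<Sum>c\<in>Basis. (h \<bullet> c) * dderiv [c, b] \<eta> (x + t *\<^sub>R h)))" for t
    have "(\<phi> has_real_derivative \<phi>' t) (at t)" for t
      unfolding \<phi>_def \<phi>'_def using has_real_derivative_along_line[of \<eta> x h t] smooth[of "[]"] by simp
    moreover have "(\<phi>' has_real_derivative \<phi>'' t) (at t)" for t
      unfolding \<phi>'_def \<phi>''_def
    proof (intro DERIV_sum DERIV_cmult)
      fix b :: 'a
      show "((\<lambda>t. dderiv [b] \<eta> (x + t *\<^sub>R h)) has_real_derivative
          (\<Sum>c\<in>Basis. (h \<bullet> c) * dderiv [c, b] \<eta> (x + t *\<^sub>R h))) (at t)"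
        using has_real_derivative_along_line[of "dderiv [b] \<eta>" x h t, OF smooth] by simp
    qed
    moreover have "\<bar>\<phi>'' t\<bar> \<le> M * (norm h)\<^sup>2" for t
      unfolding \<phi>''_def M_def using B(2) by (intro sum_Basis_quadratic_form_le)
    ultimately have "\<bar>\<phi> 1 + \<phi> (-1) - 2 * \<phi> 0\<bar> \<le> 2 * (M * (norm h)\<^sup>2)"
      by (rule second_difference_le)
    then show ?thesis by (simp add: \<phi>_def mult.assoc)
  qed
  moreover have "M \<ge> 0" unfolding M_def using B(1) by (intro sum_nonneg) auto
  ultimately show ?thesis by (intro exI[of _ "2 * M"]) auto
qed

lemma integrable_powr_atLeast:
  fixes a e :: real
  assumes "0 < a" and "e < -1"
  shows "integrable lborel (\<lambda>r. indicator {a..} r * r powr e)"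
proof -
  have "(\<lambda>x. x powr e) integrable_on {a..}"
    using has_integral_powr_to_inf[OF assms(2,1)] by blast
  then have "(\<lambda>x. x powr e) absolutely_integrable_on {a..}"
    by (rule nonnegative_absolutely_integrable_1) simp
  then show ?thesis
    unfolding set_integrable_def by (subst (asm) integrable_completion) auto
qed

lemma integrable_powr_0_1:
  fixes e :: real
  assumes "-1 < e"
  shows "integrable lborel (\<lambda>r. indicator {0<..1} r * r powr e)"
proof -
  have "(\<lambda>x. x powr e) integrable_on {0<..1}"
    using integrable_on_powr_from_0'[OF assms] by simp
  then have "(\<lambda>x. x powr e) absolutely_integrable_on {0<..1}"
    by (rule nonnegative_absolutely_integrable_1) simp
  then show ?thesis
    unfolding set_integrable_def by (subst (asm) integrable_completion) auto
qed

lemma integrable_one_plus_abs_powr: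
  fixes e :: real
  assumes "e < -1"
  shows "integrable lborel (\<lambda>r. (1 + \<bar>r\<bar>) powr e)"
proof -
  have tail: "integrable lborel (\<lambda>r. indicator {1..} r * r powr e)"
    using integrable_powr_atLeast[of 1 e] assms by simp
  let ?g = "\<lambda>c r. indicator {1..} (1 + c * r) * (1 + c * r) powr e"
  have "integrable lborel (\<lambda>r. ?g 1 r + ?g (-1) r)"
    using lborel_integrable_real_affine[OF tail, of 1 1] lborel_integrable_real_affine[OF tail, of "-1" 1]
    by (intro Bochner_Integration.integrable_add) simp_all
  then show ?thesis
    by (rule Bochner_Integration.integrable_bound)
      (auto intro!: AE_I2 simp: indicator_def abs_if split: if_splits)
qed

lemma integrable_atLeast_if_abs_le_powr:
  fixes g :: "real \<Rightarrow> real"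
  assumes "0 < \<kappa>" and "1 < p" and g[measurable]: "g \<in> borel_measurable lborel"
    and bound: "\<And>r. \<bar>g r\<bar> \<le> C / \<bar>r\<bar> powr p"
  shows "integrable lborel (\<lambda>r. indicator {\<kappa>..} r * g r)"
proof (rule Bochner_Integration.integrable_bound)
  show "integrable lborel (\<lambda>r. C * (indicator {\<kappa>..} r * r powr (- p)))"
    using integrable_powr_atLeast[OF assms(1), of "- p"] assms(2) by (intro integrable_mult_right) auto
  have "\<bar>g r\<bar> \<le> \<bar>C * r powr (- p)\<bar>" if "\<kappa> \<le> r" for r
  proof -
    have "\<bar>g r\<bar> \<le> C / r powr p" using bound[of r] that assms(1) by simp
    also have "\<dots> \<le> \<bar>C\<bar> / r powr p" by (intro divide_right_mono) auto
    finally show ?thesis using that assms(1) by (simp add: powr_minus_divide abs_mult)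
  qed
  then show "AE r in lborel. norm (indicator {\<kappa>..} r * g r) \<le> norm (C * (indicator {\<kappa>..} r * r powr (- p)))"
    by (intro AE_I2) (simp add: indicator_def)
qed measurable

lemma inverse_powr_le_one_plus_powr:
  fixes r \<delta> p :: real
  assumes "0 < \<delta>" and "\<delta> \<le> \<bar>r\<bar>" and "0 \<le> p"
  shows "1 / \<bar>r\<bar> powr p \<le> (1 + 1 / \<delta>) powr p * (1 + \<bar>r\<bar>) powr (- p)"
proof -
  have r: "0 < \<bar>r\<bar>" using assms by linarith
  have "1 + \<bar>r\<bar> \<le> (1 + 1 / \<delta>) * \<bar>r\<bar>"
    using assms by (simp add: field_simps)
  then have "(1 + \<bar>r\<bar>) powr p \<le> (1 + 1 / \<delta>) powr p * \<bar>r\<bar> powr p"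
    using assms by (simp add: powr_mono2 flip: powr_mult)
  then show ?thesis
    using r by (simp add: powr_minus field_simps)
qed

lemma integrable_mult_if_dominated:
  fixes f g u :: "'a \<Rightarrow> real"
  assumes gu: "integrable M (\<lambda>x. g x * u x)"
    and [measurable]: "f \<in> borel_measurable M" "g \<in> borel_measurable M"
    and bound: "\<And>x. \<bar>f x\<bar> \<le> K * g x"
  shows "integrable M (\<lambda>x. u x * f x)"
proof (rule Bochner_Integration.integrable_bound)
  show "integrable M (\<lambda>x. K * (g x * u x))" using gu by (rule integrable_mult_right)
  have [measurable]: "(\<lambda>x. g x * u x) \<in> borel_measurable M" using gu by (rule borel_measurable_integrable)
  \<comment> \<open>\<open>u\<close> itself need not be measurable, but \<open>f\<close> vanishes where \<open>g\<close> does.\<close>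
  have "(\<lambda>x. u x * f x) = (\<lambda>x. (g x * u x) * (f x / g x))"
  proof
    show "u x * f x = (g x * u x) * (f x / g x)" for x
      using bound[of x] by (cases "g x = 0") auto
  qed
  then show "(\<lambda>x. u x * f x) \<in> borel_measurable M" by (simp only:) measurable
  have "\<bar>u x * f x\<bar> \<le> \<bar>K * (g x * u x)\<bar>" for x
  proof -
    have "\<bar>u x * f x\<bar> \<le> \<bar>u x\<bar> * (K * g x)" by (simp add: abs_mult bound mult_left_mono)
    also have "\<dots> \<le> \<bar>u x\<bar> * \<bar>K * g x\<bar>" by (intro mult_left_mono) auto
    also have "\<dots> = \<bar>K * (g x * u x)\<bar>" by (simp add: abs_mult)
    finally show ?thesis .
  qed
  then show "AE x in M. norm (u x * f x) \<le> norm (K * (g x * u x))" by simp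
qed

locale A_op_setting =
  fixes s :: real and \<mu> :: "'a::euclidean_space measure" and \<eta> :: "'a \<Rightarrow> real" and N M :: real
  assumes s_pos: "0 < s" and s_less_1: "s < 1"
    and finite_measure: "finite_measure \<mu>" and sets_\<mu>: "sets \<mu> = sets borel"
    and AE_sphere: "AE \<theta> in \<mu>. norm \<theta> = 1"
    and continuous: "continuous_on UNIV \<eta>"
    and bounded: "\<And>x. \<bar>\<eta> x\<bar> \<le> N"
    and second_difference: "\<And>x h. \<bar>\<eta> (x + h) + \<eta> (x - h) - 2 * \<eta> x\<bar> \<le> M * (norm h)\<^sup>2"
    and M_nonneg: "0 \<le> M"
begin

lemmas [measurable_cong] = sets_\<mu>

interpretation \<mu>: finite_measure \<mu> by (rule finite_measure)

lemma \<eta>_measurable[measurable]: "\<eta> \<in> borel_measurable borel"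
  using continuous by (rule borel_measurable_continuous_onI)

lemma N_nonneg: "0 \<le> N"
  using bounded[of 0] by simp

abbreviation mass :: real where
  "mass \<equiv> measure \<mu> (space \<mu>)"

definition ray_integral :: "'a \<Rightarrow> real \<Rightarrow> real" where
  "ray_integral x r = (LINT \<theta>|\<mu>. (\<eta> x - \<eta> (x + r *\<^sub>R \<theta>)) / \<bar>r\<bar> powr (1 + 2 * s))"

definition sym_ray_integral :: "'a \<Rightarrow> real \<Rightarrow> real" where
  "sym_ray_integral x r = ray_integral x r + ray_integral x (-r)"

definition A_pv :: "'a \<Rightarrow> real" where
  "A_pv x = (LINT r|lborel. indicator {0<..} r * sym_ray_integral x r)"

lemma ray_integral_measurable[measurable]: "(\<lambda>r. ray_integral x r) \<in> borel_measurable lborel"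
  unfolding ray_integral_def by measurable

lemma sym_ray_integral_measurable[measurable]: "(\<lambda>r. sym_ray_integral x r) \<in> borel_measurable lborel"
  unfolding sym_ray_integral_def by measurable

lemma A_pv_measurable: "A_pv \<in> borel_measurable lborel"
proof -
  have "(\<lambda>x. A_pv x) \<in> borel_measurable lborel"
    unfolding A_pv_def sym_ray_integral_def ray_integral_def by measurable
  then show ?thesis by simp
qed

lemma ray_integrand_abs_le:
  "\<bar>(\<eta> x - \<eta> (x + r *\<^sub>R \<theta>)) / \<bar>r\<bar> powr (1 + 2 * s)\<bar> \<le> 2 * N / \<bar>r\<bar> powr (1 + 2 * s)"
proof -
  have "\<bar>\<eta> x - \<eta> (x + r *\<^sub>R \<theta>)\<bar> \<le> 2 * N"
    using bounded[of x] bounded[of "x + r *\<^sub>R \<theta>"] by linarith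
  then show ?thesis by (simp add: divide_right_mono)
qed

lemma integrable_ray_integrand:
  "integrable \<mu> (\<lambda>\<theta>. (\<eta> x - \<eta> (x + r *\<^sub>R \<theta>)) / \<bar>r\<bar> powr (1 + 2 * s))"
proof (rule \<mu>.integrable_const_bound[where B = "2 * N / \<bar>r\<bar> powr (1 + 2 * s)"])
  show "AE \<theta> in \<mu>. norm ((\<eta> x - \<eta> (x + r *\<^sub>R \<theta>)) / \<bar>r\<bar> powr (1 + 2 * s))
      \<le> 2 * N / \<bar>r\<bar> powr (1 + 2 * s)"
    using ray_integrand_abs_le by simp
qed measurable

lemma ray_integral_abs_le: "\<bar>ray_integral x r\<bar> \<le> mass * (2 * N / \<bar>r\<bar> powr (1 + 2 * s))"
proof -
  have "\<bar>ray_integral x r\<bar> \<le> (LINT \<theta>|\<mu>. norm ((\<eta> x - \<eta> (x + r *\<^sub>R \<theta>)) / \<bar>r\<bar> powr (1 + 2 * s)))"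
    unfolding ray_integral_def real_norm_def[symmetric] by (rule integral_norm_bound)
  also have "\<dots> \<le> (LINT \<theta>|\<mu>. 2 * N / \<bar>r\<bar> powr (1 + 2 * s))"
    by (rule integral_mono[OF integrable_norm[OF integrable_ray_integrand]])
      (simp_all only: real_norm_def ray_integrand_abs_le \<mu>.integrable_const)
  finally show ?thesis by simp
qed

lemma sym_ray_integral_eq:
  "sym_ray_integral x r =
     (LINT \<theta>|\<mu>. (2 * \<eta> x - \<eta> (x + r *\<^sub>R \<theta>) - \<eta> (x - r *\<^sub>R \<theta>)) / \<bar>r\<bar> powr (1 + 2 * s))"
proof -
  have "sym_ray_integral x r = (LINT \<theta>|\<mu>. (\<eta> x - \<eta> (x + r *\<^sub>R \<theta>)) / \<bar>r\<bar> powr (1 + 2 * s)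
      + (\<eta> x - \<eta> (x + (-r) *\<^sub>R \<theta>)) / \<bar>-r\<bar> powr (1 + 2 * s))"
    unfolding sym_ray_integral_def ray_integral_def
    by (rule Bochner_Integration.integral_add[OF integrable_ray_integrand integrable_ray_integrand, symmetric])
  also have "\<dots> = (LINT \<theta>|\<mu>. (2 * \<eta> x - \<eta> (x + r *\<^sub>R \<theta>) - \<eta> (x - r *\<^sub>R \<theta>)) / \<bar>r\<bar> powr (1 + 2 * s))"
    by (rule Bochner_Integration.integral_cong[OF refl]) (simp add: add_divide_distrib[symmetric])
  finally show ?thesis .
qed

lemma sym_ray_integral_abs_le: "\<bar>sym_ray_integral x r\<bar> \<le> mass * (M * r\<^sup>2 / \<bar>r\<bar> powr (1 + 2 * s))"
proof -
  let ?f = "\<lambda>\<theta>. (2 * \<eta> x - \<eta> (x + r *\<^sub>R \<theta>) - \<eta> (x - r *\<^sub>R \<theta>)) / \<bar>r\<bar> powr (1 + 2 * s)"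
  have "integrable \<mu> ?f"
  proof (rule \<mu>.integrable_const_bound[where B = "4 * N / \<bar>r\<bar> powr (1 + 2 * s)"])
    have "\<bar>2 * \<eta> x - \<eta> (x + r *\<^sub>R \<theta>) - \<eta> (x - r *\<^sub>R \<theta>)\<bar> \<le> 4 * N" for \<theta>
      using bounded[of x] bounded[of "x + r *\<^sub>R \<theta>"] bounded[of "x - r *\<^sub>R \<theta>"] by linarith
    then show "AE \<theta> in \<mu>. norm (?f \<theta>) \<le> 4 * N / \<bar>r\<bar> powr (1 + 2 * s)"
      by (intro AE_I2) (simp add: divide_right_mono)
  qed measurable
  have "norm (?f \<theta>) \<le> M * r\<^sup>2 / \<bar>r\<bar> powr (1 + 2 * s)" if "norm \<theta> = 1" for \<theta>
  proof -
    have "\<bar>2 * \<eta> x - \<eta> (x + r *\<^sub>R \<theta>) - \<eta> (x - r *\<^sub>R \<theta>)\<bar> \<le> M * (norm (r *\<^sub>R \<theta>))\<^sup>2"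
      using second_difference[of x "r *\<^sub>R \<theta>"] by linarith
    then show ?thesis using that by (simp add: divide_right_mono)
  qed
  then have "(LINT \<theta>|\<mu>. norm (?f \<theta>)) \<le> (LINT \<theta>|\<mu>. M * r\<^sup>2 / \<bar>r\<bar> powr (1 + 2 * s))"
    using AE_sphere \<open>integrable \<mu> ?f\<close>
    by (intro integral_mono_AE integrable_norm \<mu>.integrable_const) (auto elim!: eventually_mono)
  then show ?thesis
    unfolding sym_ray_integral_eq using integral_norm_bound[of \<mu> ?f] by simp
qed

definition ray_majorant :: "real \<Rightarrow> real" where
  "ray_majorant r = M * (indicator {0<..1} r * r powr (1 - 2 * s))
     + 4 * N * (indicator {1..} r * r powr (-1 - 2 * s))"

lemma integrable_ray_majorant: "integrable lborel ray_majorant"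
  unfolding ray_majorant_def
  using integrable_powr_0_1[of "1 - 2 * s"] integrable_powr_atLeast[of 1 "-1 - 2 * s"] s_pos s_less_1
  by (intro integrable_mult_right Bochner_Integration.integrable_add) auto

lemma ray_majorant_nonneg: "0 \<le> ray_majorant r"
  unfolding ray_majorant_def using M_nonneg N_nonneg
  by (intro mult_nonneg_nonneg add_nonneg_nonneg) (auto simp: indicator_def)

lemma sym_ray_integral_le_majorant:
  assumes "0 < r"
  shows "\<bar>sym_ray_integral x r\<bar> \<le> mass * ray_majorant r"
proof (cases "r \<le> 1")
  case True
  have "r\<^sup>2 / \<bar>r\<bar> powr (1 + 2 * s) = r powr 2 / r powr (1 + 2 * s)"
    using assms by (simp add: powr_realpow)
  also have "\<dots> = r powr (1 - 2 * s)"
    by (simp add: powr_diff[symmetric])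
  finally have "r\<^sup>2 / \<bar>r\<bar> powr (1 + 2 * s) = r powr (1 - 2 * s)" .
  then have "\<bar>sym_ray_integral x r\<bar> \<le> mass * (M * r powr (1 - 2 * s))"
    using sym_ray_integral_abs_le[of x r] by (simp only: times_divide_eq_right[symmetric])
  also have "\<dots> \<le> mass * ray_majorant r"
    unfolding ray_majorant_def using True assms M_nonneg N_nonneg
    by (intro mult_left_mono) (auto simp: indicator_def)
  finally show ?thesis .
next
  case False
  have "\<bar>sym_ray_integral x r\<bar> \<le> \<bar>ray_integral x r\<bar> + \<bar>ray_integral x (-r)\<bar>"
    unfolding sym_ray_integral_def by (rule abs_triangle_ineq)
  also have "\<dots> \<le> mass * (2 * N / \<bar>r\<bar> powr (1 + 2 * s)) + mass * (2 * N / \<bar>-r\<bar> powr (1 + 2 * s))"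
    by (intro add_mono ray_integral_abs_le)
  also have "\<dots> = mass * (4 * N * r powr (-1 - 2 * s))"
  proof -
    have "r powr (-1 - 2 * s) = 1 / r powr (1 + 2 * s)"
      using powr_minus_divide[of r "1 + 2 * s"] by (simp add: algebra_simps)
    then show ?thesis using assms by simp
  qed
  also have "\<dots> \<le> mass * ray_majorant r"
    unfolding ray_majorant_def using False assms M_nonneg N_nonneg
    by (intro mult_left_mono) (auto simp: indicator_def)
  finally show ?thesis .
qed

lemma A_pv_abs_le: "\<bar>A_pv x\<bar> \<le> mass * (LINT r|lborel. ray_majorant r)"
proof -
  have bound: "norm (indicator {0<..} r * sym_ray_integral x r) \<le> mass * ray_majorant r" for r :: real
    using sym_ray_integral_le_majorant[of r x] ray_majorant_nonneg[of r] by (cases "0 < r") auto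
  have "\<bar>A_pv x\<bar> \<le> (LINT r|lborel. norm (indicator {0<..} r * sym_ray_integral x r))"
    unfolding A_pv_def real_norm_def[symmetric] by (rule integral_norm_bound)
  also have "\<dots> \<le> (LINT r|lborel. mass * ray_majorant r)"
  proof (rule integral_mono[OF _ _ bound])
    show "integrable lborel (\<lambda>r. mass * ray_majorant r)"
      using integrable_ray_majorant by (rule integrable_mult_right)
    then show "integrable lborel (\<lambda>r. norm (indicator {0<..} r * sym_ray_integral x r))"
    proof (rule Bochner_Integration.integrable_bound)
      show "AE r in lborel. norm (norm (indicator {0<..} r * sym_ray_integral x r)) \<le> norm (mass * ray_majorant r)"
        using order_trans[OF bound abs_ge_self] by simp
    qed simp
  qed
  finally show ?thesis by simp
qed

lemma truncated_integral_eq: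
  assumes "0 < \<kappa>"
  shows "(LINT r:{r. \<kappa> \<le> \<bar>r\<bar>}|lborel. ray_integral x r)
    = (LINT r|lborel. indicator {\<kappa>..} r * sym_ray_integral x r)"
proof -
  have tail: "integrable lborel (\<lambda>r. indicator {\<kappa>..} r * ray_integral x (c * r))" if "\<bar>c\<bar> = 1" for c
  proof (rule integrable_atLeast_if_abs_le_powr[OF assms, of "1 + 2 * s" _ "mass * (2 * N)"])
    show "\<bar>ray_integral x (c * r)\<bar> \<le> mass * (2 * N) / \<bar>r\<bar> powr (1 + 2 * s)" for r
      using ray_integral_abs_le[of x "c * r"] that by (simp add: abs_mult)
  qed (use s_pos in simp_all)
  have pos: "integrable lborel (\<lambda>r. indicator {\<kappa>..} r * ray_integral x r)"
    and neg: "integrable lborel (\<lambda>r. indicator {\<kappa>..} r * ray_integral x (-r))"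
    using tail[of 1] tail[of "-1"] by simp_all
  have neg': "integrable lborel (\<lambda>r. indicator {..-\<kappa>} r * ray_integral x r)"
    using lborel_integrable_real_affine[OF neg, of "-1" 0] by (simp add: indicator_def le_minus_iff)
  have "indicator {r. \<kappa> \<le> \<bar>r\<bar>} r = (indicator {\<kappa>..} r + indicator {..-\<kappa>} r :: real)" for r :: real
    using assms by (auto simp: indicator_def)
  then have "(LINT r:{r. \<kappa> \<le> \<bar>r\<bar>}|lborel. ray_integral x r)
      = (LINT r|lborel. indicator {\<kappa>..} r * ray_integral x r + indicator {..-\<kappa>} r * ray_integral x r)"
    unfolding set_lebesgue_integral_def by (simp add: distrib_right)
  also have "\<dots> = (LINT r|lborel. indicator {\<kappa>..} r * ray_integral x r)
      + (LINT r|lborel. indicator {..-\<kappa>} r * ray_integral x r)"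
    by (rule Bochner_Integration.integral_add[OF pos neg'])
  also have "(LINT r|lborel. indicator {..-\<kappa>} r * ray_integral x r)
      = (LINT r|lborel. indicator {\<kappa>..} r * ray_integral x (-r))"
    using lborel_integral_real_affine[of "-1" "\<lambda>r. indicator {..-\<kappa>} r * ray_integral x r" 0]
    by (simp add: indicator_def le_minus_iff)
  also have "(LINT r|lborel. indicator {\<kappa>..} r * ray_integral x r)
      + (LINT r|lborel. indicator {\<kappa>..} r * ray_integral x (-r))
      = (LINT r|lborel. indicator {\<kappa>..} r * sym_ray_integral x r)"
    unfolding sym_ray_integral_def distrib_left
    by (rule Bochner_Integration.integral_add[OF pos neg, symmetric])
  finally show ?thesis .
qed

lemma truncated_integral_tendsto:
  "((\<lambda>\<kappa>. LINT r:{r. \<kappa> \<le> \<bar>r\<bar>}|lborel. ray_integral x r) \<longlongrightarrow> A_pv x) (at_right 0)"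
proof -
  have "((\<lambda>\<kappa>. LINT r|lborel. indicator {\<kappa>..} r * sym_ray_integral x r) \<longlongrightarrow> A_pv x) (at_right 0)"
  proof (rule tendsto_at_right_sequentially[of 0 1])
    fix \<kappa> :: "nat \<Rightarrow> real"
    assume \<kappa>: "\<And>n. 0 < \<kappa> n" "\<kappa> \<longlonglongrightarrow> 0"
    show "(\<lambda>n. LINT r|lborel. indicator {\<kappa> n..} r * sym_ray_integral x r) \<longlonglongrightarrow> A_pv x"
      unfolding A_pv_def
    proof (rule integral_dominated_convergence[where w = "\<lambda>r. mass * ray_majorant r"])
      show "integrable lborel (\<lambda>r. mass * ray_majorant r)"
        using integrable_ray_majorant by (rule integrable_mult_right)
      have "(\<lambda>n. indicator {\<kappa> n..} r * sym_ray_integral x r) \<longlonglongrightarrow> indicator {0<..} r * sym_ray_integral x r"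
        for r :: real
      proof (cases "0 < r")
        case True
        then have "\<forall>\<^sub>F n in sequentially. \<kappa> n < r" using order_tendstoD(2)[OF \<kappa>(2)] by blast
        then have "\<forall>\<^sub>F n in sequentially.
            indicator {0<..} r * sym_ray_integral x r = indicator {\<kappa> n..} r * sym_ray_integral x r"
          by eventually_elim (use True in \<open>auto simp: indicator_def\<close>)
        then show ?thesis by (rule Lim_transform_eventually[OF tendsto_const])
      next
        case False
        then have "indicator {\<kappa> n..} r * sym_ray_integral x r = indicator {0<..} r * sym_ray_integral x r" for n
          using \<kappa>(1)[of n] by (auto simp: indicator_def)
        then show ?thesis by (simp only: tendsto_const)
      qed
      then show "AE r in lborel. (\<lambda>n. indicator {\<kappa> n..} r * sym_ray_integral x r)
          \<longlonglongrightarrow> indicator {0<..} r * sym_ray_integral x r" by simp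
      have "norm (indicator {\<kappa> n..} r * sym_ray_integral x r) \<le> mass * ray_majorant r" for n r
        using sym_ray_integral_le_majorant[of r x] ray_majorant_nonneg[of r] \<kappa>(1)[of n]
        by (cases "\<kappa> n \<le> r") (auto simp: indicator_def)
      then show "AE r in lborel. norm (indicator {\<kappa> n..} r * sym_ray_integral x r) \<le> mass * ray_majorant r"
        for n by simp
    qed measurable
  qed simp
  moreover have "\<forall>\<^sub>F \<kappa> in at_right 0. (LINT r|lborel. indicator {\<kappa>..} r * sym_ray_integral x r)
      = (LINT r:{r. \<kappa> \<le> \<bar>r\<bar>}|lborel. ray_integral x r)"
    using eventually_at_right_less[of "0::real"] by eventually_elim (simp add: truncated_integral_eq)
  ultimately show ?thesis by (rule Lim_transform_eventually)
qed

lemma A_op_eq_A_pv: "A_op s \<mu> \<eta> x = A_pv x"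
  unfolding A_op_def ray_integral_def[symmetric]
  by (rule tendsto_Lim[OF _ truncated_integral_tendsto]) simp

lemma A_op_measurable: "A_op s \<mu> \<eta> \<in> borel_measurable lborel"
  using A_pv_measurable by (simp add: A_op_eq_A_pv[abs_def])

context
  fixes \<Omega> :: "'a set"
  assumes open_\<Omega>: "open \<Omega>"
begin

lemma \<Omega>_measurable[measurable]: "\<Omega> \<in> sets borel"
  using open_\<Omega> by simp

definition nu_density :: "'a \<Rightarrow> real \<Rightarrow> real" where
  "nu_density x r = (LINT \<theta>|\<mu>. indicator \<Omega> (x + r *\<^sub>R \<theta>) * (1 + \<bar>r\<bar>) powr (-1 - 2 * s))"

lemma nu_star_eq_integral_nu_density: "nu_star s \<mu> \<Omega> x = (LINT r|lborel. nu_density x r)"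
  unfolding nu_star_def nu_density_def ..

lemma nu_density_measurable[measurable]: "(\<lambda>r. nu_density x r) \<in> borel_measurable lborel"
  unfolding nu_density_def by measurable

lemma nu_star_measurable: "nu_star s \<mu> \<Omega> \<in> borel_measurable lborel"
proof -
  have "(\<lambda>x. nu_star s \<mu> \<Omega> x) \<in> borel_measurable lborel"
    unfolding nu_star_def by measurable
  then show ?thesis by simp
qed

lemma integrable_nu_density_integrand:
  "integrable \<mu> (\<lambda>\<theta>. indicator \<Omega> (x + r *\<^sub>R \<theta>) * (1 + \<bar>r\<bar>) powr (-1 - 2 * s))"
  by (rule \<mu>.integrable_const_bound[where B = "(1 + \<bar>r\<bar>) powr (-1 - 2 * s)"])
    (auto simp: indicator_def)

lemma nu_density_nonneg: "0 \<le> nu_density x r"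
  unfolding nu_density_def by (rule integral_nonneg_AE) auto

lemma nu_density_le: "nu_density x r \<le> mass * (1 + \<bar>r\<bar>) powr (-1 - 2 * s)"
proof -
  have "nu_density x r \<le> (LINT \<theta>|\<mu>. (1 + \<bar>r\<bar>) powr (-1 - 2 * s))"
    unfolding nu_density_def
    by (rule integral_mono[OF integrable_nu_density_integrand]) (auto simp: indicator_def)
  then show ?thesis by simp
qed

lemma integrable_nu_density: "integrable lborel (\<lambda>r. nu_density x r)"
proof (rule Bochner_Integration.integrable_bound)
  show "integrable lborel (\<lambda>r. mass * (1 + \<bar>r\<bar>) powr (-1 - 2 * s))"
    using integrable_one_plus_abs_powr[of "-1 - 2 * s"] s_pos by (intro integrable_mult_right) auto
  show "AE r in lborel. norm (nu_density x r) \<le> norm (mass * (1 + \<bar>r\<bar>) powr (-1 - 2 * s))"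
    using nu_density_le[of x] nu_density_nonneg[of x] by auto
qed measurable

lemma nu_star_nonneg: "0 \<le> nu_star s \<mu> \<Omega> x"
  unfolding nu_star_eq_integral_nu_density by (rule integral_nonneg_AE) (auto simp: nu_density_nonneg)

lemma nu_star_ge:
  assumes "0 < \<delta>" and in_\<Omega>: "\<And>r \<theta>. \<bar>r\<bar> < \<delta> \<Longrightarrow> norm \<theta> = 1 \<Longrightarrow> x + r *\<^sub>R \<theta> \<in> \<Omega>"
  shows "\<delta> * (1 + \<delta>) powr (-1 - 2 * s) * mass \<le> nu_star s \<mu> \<Omega> x"
proof -
  let ?c = "(1 + \<delta>) powr (-1 - 2 * s) * mass"
  have le: "indicator {0<..<\<delta>} r * ?c \<le> nu_density x r" for r :: real
  proof (cases "r \<in> {0<..<\<delta>}")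
    case True
    have "nu_density x r = (LINT \<theta>|\<mu>. (1 + r) powr (-1 - 2 * s))"
      unfolding nu_density_def
    proof (rule integral_cong_AE)
      show "AE \<theta> in \<mu>. indicator \<Omega> (x + r *\<^sub>R \<theta>) * (1 + \<bar>r\<bar>) powr (-1 - 2 * s) = (1 + r) powr (-1 - 2 * s)"
        using AE_sphere by eventually_elim (use True in_\<Omega> in auto)
    qed measurable
    also have "\<dots> \<ge> mass * (1 + \<delta>) powr (-1 - 2 * s)"
      using True s_pos by (simp add: mult_left_mono powr_mono2')
    finally show ?thesis using True by (simp add: mult.commute)
  qed (simp add: nu_density_nonneg)
  have "(LINT r|lborel. indicator {0<..<\<delta>} r * ?c) \<le> (LINT r|lborel. nu_density x r)"
    using assms(1) by (intro integral_mono[OF _ integrable_nu_density le] integrable_mult_left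
        integrable_real_indicator) (auto simp: emeasure_lborel_Ioo)
  then show ?thesis
    using assms(1) by (simp add: nu_star_eq_integral_nu_density mult.assoc)
qed

lemma A_pv_abs_le_nu_star_near:
  assumes "0 < \<delta>" and "\<And>r \<theta>. \<bar>r\<bar> < \<delta> \<Longrightarrow> norm \<theta> = 1 \<Longrightarrow> x + r *\<^sub>R \<theta> \<in> \<Omega>"
  shows "\<bar>A_pv x\<bar> \<le> (LINT r|lborel. ray_majorant r) / (\<delta> * (1 + \<delta>) powr (-1 - 2 * s)) * nu_star s \<mu> \<Omega> x"
proof -
  let ?Q = "LINT r|lborel. ray_majorant r" and ?c = "\<delta> * (1 + \<delta>) powr (-1 - 2 * s)"
  have "0 < ?c" and "0 \<le> ?Q"
    using assms(1) ray_majorant_nonneg by (auto intro: integral_nonneg_AE)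
  have "\<bar>A_pv x\<bar> \<le> mass * ?Q" by (rule A_pv_abs_le)
  also have "\<dots> = ?Q / ?c * (?c * mass)"
    using assms(1) by simp
  also have "\<dots> \<le> ?Q / ?c * nu_star s \<mu> \<Omega> x"
    using nu_star_ge[OF assms] \<open>0 < ?c\<close> \<open>0 \<le> ?Q\<close> by (intro mult_left_mono) auto
  finally show ?thesis .
qed

lemma ray_integral_abs_le_nu_density:
  assumes "0 < \<delta>" and "\<eta> x = 0"
    and near: "\<And>r \<theta>. \<bar>r\<bar> < \<delta> \<Longrightarrow> norm \<theta> = 1 \<Longrightarrow> \<eta> (x + r *\<^sub>R \<theta>) = 0"
    and outside: "\<And>y. y \<notin> \<Omega> \<Longrightarrow> \<eta> y = 0"
  shows "\<bar>ray_integral x r\<bar> \<le> N * (1 + 1 / \<delta>) powr (1 + 2 * s) * nu_density x r"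
proof -
  let ?C = "N * (1 + 1 / \<delta>) powr (1 + 2 * s)"
  let ?k = "\<lambda>\<theta>. indicator \<Omega> (x + r *\<^sub>R \<theta>) * (1 + \<bar>r\<bar>) powr (-1 - 2 * s)"
  have "norm ((\<eta> x - \<eta> (x + r *\<^sub>R \<theta>)) / \<bar>r\<bar> powr (1 + 2 * s)) \<le> ?C * ?k \<theta>"
    if "norm \<theta> = 1" for \<theta>
  proof (cases "\<bar>r\<bar> < \<delta> \<or> x + r *\<^sub>R \<theta> \<notin> \<Omega>")
    case True
    then show ?thesis using assms that N_nonneg by (auto simp: indicator_def)
  next
    case False
    have "norm ((\<eta> x - \<eta> (x + r *\<^sub>R \<theta>)) / \<bar>r\<bar> powr (1 + 2 * s)) \<le> N * (1 / \<bar>r\<bar> powr (1 + 2 * s))"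
      using \<open>\<eta> x = 0\<close> bounded[of "x + r *\<^sub>R \<theta>"] by (simp add: divide_right_mono)
    also have "\<dots> \<le> N * ((1 + 1 / \<delta>) powr (1 + 2 * s) * (1 + \<bar>r\<bar>) powr (- (1 + 2 * s)))"
      using False assms(1) s_pos N_nonneg by (intro mult_left_mono inverse_powr_le_one_plus_powr) auto
    finally show ?thesis using False by (simp add: mult.assoc)
  qed
  then have "(LINT \<theta>|\<mu>. norm ((\<eta> x - \<eta> (x + r *\<^sub>R \<theta>)) / \<bar>r\<bar> powr (1 + 2 * s)))
      \<le> (LINT \<theta>|\<mu>. ?C * ?k \<theta>)"
    using AE_sphere
    by (intro integral_mono_AE integrable_norm integrable_ray_integrand integrable_mult_right
        integrable_nu_density_integrand) (auto elim!: eventually_mono)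
  then show ?thesis
    unfolding ray_integral_def nu_density_def
    using integral_norm_bound[of \<mu> "\<lambda>\<theta>. (\<eta> x - \<eta> (x + r *\<^sub>R \<theta>)) / \<bar>r\<bar> powr (1 + 2 * s)"] by simp
qed

lemma A_pv_abs_le_nu_star_far:
  assumes "0 < \<delta>" and "\<eta> x = 0"
    and "\<And>r \<theta>. \<bar>r\<bar> < \<delta> \<Longrightarrow> norm \<theta> = 1 \<Longrightarrow> \<eta> (x + r *\<^sub>R \<theta>) = 0"
    and "\<And>y. y \<notin> \<Omega> \<Longrightarrow> \<eta> y = 0"
  shows "\<bar>A_pv x\<bar> \<le> 2 * (N * (1 + 1 / \<delta>) powr (1 + 2 * s)) * nu_star s \<mu> \<Omega> x"
proof -
  let ?C = "N * (1 + 1 / \<delta>) powr (1 + 2 * s)"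
  have reflected: "integrable lborel (\<lambda>r. nu_density x (-r))"
    using lborel_integrable_real_affine[OF integrable_nu_density[of x], of "-1" 0] by simp
  have bound: "norm (indicator {0<..} r * sym_ray_integral x r) \<le> ?C * (nu_density x r + nu_density x (-r))"
    for r
  proof -
    have "norm (indicator {0<..} r * sym_ray_integral x r) \<le> \<bar>ray_integral x r\<bar> + \<bar>ray_integral x (-r)\<bar>"
      unfolding sym_ray_integral_def by (simp add: indicator_def abs_triangle_ineq)
    also have "\<dots> \<le> ?C * nu_density x r + ?C * nu_density x (-r)"
      by (intro add_mono ray_integral_abs_le_nu_density[OF assms])
    finally show ?thesis by (simp add: distrib_left)
  qed
  have integrable: "integrable lborel (\<lambda>r. ?C * (nu_density x r + nu_density x (-r)))"
    by (intro integrable_mult_right Bochner_Integration.integrable_add integrable_nu_density reflected)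
  have "\<bar>A_pv x\<bar> \<le> (LINT r|lborel. norm (indicator {0<..} r * sym_ray_integral x r))"
    unfolding A_pv_def real_norm_def[symmetric] by (rule integral_norm_bound)
  also have "\<dots> \<le> (LINT r|lborel. ?C * (nu_density x r + nu_density x (-r)))"
  proof (rule integral_mono[OF _ integrable bound])
    show "integrable lborel (\<lambda>r. norm (indicator {0<..} r * sym_ray_integral x r))"
    proof (rule Bochner_Integration.integrable_bound[OF integrable])
      show "AE r in lborel. norm (norm (indicator {0<..} r * sym_ray_integral x r))
          \<le> norm (?C * (nu_density x r + nu_density x (-r)))"
        using order_trans[OF bound abs_ge_self] by simp
    qed simp
  qed
  also have "\<dots> = ?C * ((LINT r|lborel. nu_density x r) + (LINT r|lborel. nu_density x (-r)))"
    using Bochner_Integration.integral_add[OF integrable_nu_density[of x] reflected] by simp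
  also have "(LINT r|lborel. nu_density x (-r)) = (LINT r|lborel. nu_density x r)"
    using lborel_integral_real_affine[of "-1" "\<lambda>r. nu_density x r" 0] by simp
  finally show ?thesis by (simp add: nu_star_eq_integral_nu_density)
qed

lemma A_op_abs_le_nu_star:
  assumes "compact S" and "S \<subseteq> \<Omega>" and vanish: "\<And>x. x \<notin> S \<Longrightarrow> \<eta> x = 0"
  shows "\<exists>K. \<forall>x. \<bar>A_op s \<mu> \<eta> x\<bar> \<le> K * nu_star s \<mu> \<Omega> x"
proof -
  have "closed (- \<Omega>)" and "S \<inter> - \<Omega> = {}"
    using open_\<Omega> assms(2) by auto
  then obtain d where "d > 0" and d: "\<forall>x\<in>S. \<forall>y\<in>- \<Omega>. d \<le> dist x y"
    using separate_compact_closed[OF \<open>compact S\<close>] by blast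
  define \<delta> where "\<delta> = d / 2"
  have "0 < \<delta>" using \<open>d > 0\<close> by (simp add: \<delta>_def)
  define K_near where "K_near = (LINT r|lborel. ray_majorant r) / (\<delta> * (1 + \<delta>) powr (-1 - 2 * s))"
  define K_far where "K_far = 2 * (N * (1 + 1 / \<delta>) powr (1 + 2 * s))"
  have "0 \<le> K_near" "0 \<le> K_far"
    unfolding K_near_def K_far_def using \<open>0 < \<delta>\<close> ray_majorant_nonneg N_nonneg
    by (auto intro!: divide_nonneg_pos integral_nonneg_AE)
  have dist_ray: "dist x (x + r *\<^sub>R \<theta>) = \<bar>r\<bar>" if "norm \<theta> = 1" for x r and \<theta> :: 'a
    using that by (simp add: dist_norm)
  have "\<bar>A_pv x\<bar> \<le> (K_near + K_far) * nu_star s \<mu> \<Omega> x" for x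
  proof (cases "\<exists>y\<in>S. dist x y < \<delta>")
    case True
    then obtain y where "y \<in> S" "dist x y < \<delta>" by blast
    have "x + r *\<^sub>R \<theta> \<in> \<Omega>" if "\<bar>r\<bar> < \<delta>" "norm \<theta> = 1" for r \<theta>
    proof (rule ccontr)
      assume "x + r *\<^sub>R \<theta> \<notin> \<Omega>"
      then have "d \<le> dist y (x + r *\<^sub>R \<theta>)" using d \<open>y \<in> S\<close> by blast
      moreover have "dist y (x + r *\<^sub>R \<theta>) \<le> dist y x + dist x (x + r *\<^sub>R \<theta>)" by (rule dist_triangle)
      ultimately show False
        using \<open>dist x y < \<delta>\<close> that dist_ray[OF that(2)] by (simp add: \<delta>_def dist_commute)
    qed
    then have "\<bar>A_pv x\<bar> \<le> K_near * nu_star s \<mu> \<Omega> x"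
      unfolding K_near_def by (rule A_pv_abs_le_nu_star_near[OF \<open>0 < \<delta>\<close>])
    then show ?thesis using \<open>0 \<le> K_far\<close> nu_star_nonneg[of x] by (simp add: distrib_right add_increasing2)
  next
    case False
    have "\<bar>A_pv x\<bar> \<le> K_far * nu_star s \<mu> \<Omega> x"
      unfolding K_far_def
    proof (rule A_pv_abs_le_nu_star_far[OF \<open>0 < \<delta>\<close>])
      show "\<eta> x = 0" using False \<open>0 < \<delta>\<close> vanish by force
      show "\<eta> (x + r *\<^sub>R \<theta>) = 0" if "\<bar>r\<bar> < \<delta>" "norm \<theta> = 1" for r \<theta>
        using False that dist_ray[OF that(2), of x r] by (intro vanish) force
      show "\<eta> y = 0" if "y \<notin> \<Omega>" for y using that assms(2) vanish by blast
    qed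
    then show ?thesis using \<open>0 \<le> K_near\<close> nu_star_nonneg[of x] by (simp add: distrib_right add_increasing)
  qed
  then show ?thesis by (auto simp: A_op_eq_A_pv)
qed

end

end

lemma Cc_inf_A_op_setting:
  assumes "0 < s" and "s < 1" and "finite_measure \<mu>" and "sets \<mu> = sets borel"
    and "emeasure \<mu> (- sphere 0 1) = 0" and "Cc_inf \<Omega> \<eta>"
  shows "\<exists>N M. A_op_setting s \<mu> \<eta> N M"
proof -
  have "dderiv [] \<eta> differentiable (at x)" for x
    using assms(6) unfolding Cc_inf_def smooth_def by blast
  then have continuous: "continuous_on UNIV \<eta>"
    by (intro continuous_at_imp_continuous_on ballI differentiable_imp_continuous_within) simp
  obtain N where bounded: "\<And>x. \<bar>\<eta> x\<bar> \<le> N"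
    using Cc_inf_dderiv_bounded[OF assms(6), of "[]"] by auto
  obtain M where "0 \<le> M" and second_difference:
    "\<And>x h. \<bar>\<eta> (x + h) + \<eta> (x - h) - 2 * \<eta> x\<bar> \<le> M * (norm h)\<^sup>2"
    using Cc_inf_second_difference_le[OF assms(6)] by blast
  have sphere: "AE \<theta> in \<mu>. norm \<theta> = 1"
  proof (rule AE_I')
    have "- sphere (0::'a) 1 \<in> sets \<mu>"
      unfolding assms(4) by (intro borel_comp borel_closed) simp
    then show "- sphere 0 1 \<in> null_sets \<mu>" using assms(5) by (simp add: null_sets_def)
  qed auto
  have "A_op_setting s \<mu> \<eta> N M"
    by (intro A_op_setting.intro assms(1-4) continuous bounded second_difference sphere \<open>0 \<le> M\<close>)
  then show ?thesis by blast
qed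

theorem lemma2p4:
  fixes s :: real and \<mu> :: "'a::euclidean_space measure" and \<Omega> :: "'a set"
    and u \<eta> :: "'a \<Rightarrow> real"
  assumes "0 < s" "s < 1"
    and "finite_measure \<mu>" "sets \<mu> = sets borel" "emeasure \<mu> (- sphere 0 1) = 0"
    and "open \<Omega>" "bounded \<Omega>"
    and "set_integrable lborel \<Omega> u"
    and "integrable lborel (\<lambda>x. nu_star s \<mu> \<Omega> x * u x)"
    and "Cc_inf \<Omega> \<eta>"
  shows "integrable lborel (\<lambda>x. u x * A_op s \<mu> \<eta> x)"
proof -
  obtain N M where "A_op_setting s \<mu> \<eta> N M"
    using Cc_inf_A_op_setting[OF assms(1-5,10)] by blast
  then interpret A_op_setting s \<mu> \<eta> N M .
  let ?S = "closure {x. \<eta> x \<noteq> 0}"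
  have "compact ?S" and "?S \<subseteq> \<Omega>"
    using assms(10) unfolding Cc_inf_def by auto
  moreover have "\<eta> x = 0" if "x \<notin> ?S" for x
    using that closure_subset[of "{x. \<eta> x \<noteq> 0}"] by blast
  ultimately obtain K where "\<And>x. \<bar>A_op s \<mu> \<eta> x\<bar> \<le> K * nu_star s \<mu> \<Omega> x"
    using A_op_abs_le_nu_star[OF assms(6)] by blast
  then show ?thesis
    by (rule integrable_mult_if_dominated[OF assms(9) A_op_measurable nu_star_measurable[OF assms(6)]])
qed

end
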